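(* Let $A=\{(x_k,y_k):k\in[\ell]\}\subset\mathbb N^d$ be finite, $d=m+n$. Then for all $\bar k\in[\ell]$: (a) $\mathbb D_{\mathrm{in}}(x_{\bar k},y_{\bar k},T_{\mathbb Q_\infty,V}(A))=\mathbb D_{\mathrm{in}}(x_{\bar k},y_{\bar k},Z_{\mathbb Q_\infty,V}(A))$; (b) $\mathbb D_{\mathrm{in}}(x_{\bar k},y_{\bar k},T_{\mathbb Q_\infty,C}(A))=\mathbb D_{\mathrm{in}}(x_{\bar k},y_{\bar k},Z_{\mathbb Q_\infty,C}(A))$; (c) $\mathbb D_{\mathrm{out}}(x_{\bar k},y_{\bar k},T_{\mathbb Q_\infty,V}(A))=\mathbb D_{\mathrm{out}}(x_{\bar k},y_{\bar k},Z_{\mathbb Q_\infty,V}(A))$; (d) $\mathbb D_{\mathrm{out}}(x_{\bar k},y_{\bar k},T_{\mathbb Q_\infty,C}(A))=\mathbb D_{\mathrm{out}}(x_{\bar k},y_{\bar k},Z_{\mathbb Q_\infty,C}(A))$.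
   Context: $\mathbb N$ is the set of non-negative integers; $[\ell]=\{1,\dots,\ell\}$; $1\!\!1$ denotes a vector of ones; $\vee$ is componentwise max. Max-Plus technologies: $T_{\mathbb Q_\infty,V}(A)=\{(x,y)\in\mathbb{R}_+^d: x\ge\bigvee_k(t_k1\!\!1_m+x_k),\ y\le\bigvee_k(t_k1\!\!1_n+y_k),\ \max_k t_k=0,\ t\in(\mathbb{R}\cup\{-\infty\})^\ell\}$, and $T_{\mathbb Q_\infty,C}(A)$ is the same without the constraint $\max_k t_k=0$. Discrete versions: $Z_{\mathbb Q_\infty,V}(A)=T_{\mathbb Q_\infty,V}(A)\cap\mathbb N^d$, $Z_{\mathbb Q_\infty,C}(A)=T_{\mathbb Q_\infty,C}(A)\cap\mathbb N^d$. Translation distance functions: $\mathbb D_{\mathrm{in}}(x,y,T)=\sup\{\delta\in\mathbb{R}:(x-\delta1\!\!1_m,y)\in T\}$, $\mathbb D_{\mathrm{out}}(x,y,T)=\sup\{\delta\in\mathbb{R}:(x,y+\delta1\!\!1_n)\in T\}$. *)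

theory Defs
  imports "HOL-Analysis.Analysis" "HOL-Library.Extended_Real"
begin

text \<open>Weights t k range over R \<union> {-\<infinity>},
  modelled as ereal values different from \<infinity>.\<close>

definition maxplus_T_C :: "nat \<Rightarrow> (nat \<Rightarrow> real^'m) \<Rightarrow> (nat \<Rightarrow> real^'n) \<Rightarrow> ((real^'m) \<times> (real^'n)) set" where
  "maxplus_T_C l X Y = {(x, y). (\<forall>i. 0 \<le> x $ i) \<and> (\<forall>j. 0 \<le> y $ j) \<and>
     (\<exists>t :: nat \<Rightarrow> ereal. (\<forall>k\<in>{1..l}. t k \<noteq> \<infinity>) \<and>
        (\<forall>i. (SUP k\<in>{1..l}. t k + ereal (X k $ i)) \<le> ereal (x $ i)) \<and>
        (\<forall>j. ereal (y $ j) \<le> (SUP k\<in>{1..l}. t k + ereal (Y k $ j))))}"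

definition maxplus_T_V :: "nat \<Rightarrow> (nat \<Rightarrow> real^'m) \<Rightarrow> (nat \<Rightarrow> real^'n) \<Rightarrow> ((real^'m) \<times> (real^'n)) set" where
  "maxplus_T_V l X Y = {(x, y). (\<forall>i. 0 \<le> x $ i) \<and> (\<forall>j. 0 \<le> y $ j) \<and>
     (\<exists>t :: nat \<Rightarrow> ereal. (\<forall>k\<in>{1..l}. t k \<noteq> \<infinity>) \<and>
        (SUP k\<in>{1..l}. t k) = 0 \<and>
        (\<forall>i. (SUP k\<in>{1..l}. t k + ereal (X k $ i)) \<le> ereal (x $ i)) \<and>
        (\<forall>j. ereal (y $ j) \<le> (SUP k\<in>{1..l}. t k + ereal (Y k $ j))))}"

definition nat_vec :: "real^'a \<Rightarrow> bool" where
  "nat_vec v \<longleftrightarrow> (\<forall>i. v $ i \<in> \<nat>)"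

definition nat_points :: "((real^'m) \<times> (real^'n)) set" where
  "nat_points = {(x, y). nat_vec x \<and> nat_vec y}"

definition maxplus_Z_C :: "nat \<Rightarrow> (nat \<Rightarrow> real^'m) \<Rightarrow> (nat \<Rightarrow> real^'n) \<Rightarrow> ((real^'m) \<times> (real^'n)) set" where
  "maxplus_Z_C l X Y = maxplus_T_C l X Y \<inter> nat_points"

definition maxplus_Z_V :: "nat \<Rightarrow> (nat \<Rightarrow> real^'m) \<Rightarrow> (nat \<Rightarrow> real^'n) \<Rightarrow> ((real^'m) \<times> (real^'n)) set" where
  "maxplus_Z_V l X Y = maxplus_T_V l X Y \<inter> nat_points"

definition D_in :: "real^'m \<Rightarrow> real^'n \<Rightarrow> ((real^'m) \<times> (real^'n)) set \<Rightarrow> ereal" where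
  "D_in x y T = Sup (ereal ` {\<delta>. (x - (\<chi> i. \<delta>), y) \<in> T})"

definition D_out :: "real^'m \<Rightarrow> real^'n \<Rightarrow> ((real^'m) \<times> (real^'n)) set \<Rightarrow> ereal" where
  "D_out x y T = Sup (ereal ` {\<delta>. (x, y + (\<chi> j. \<delta>)) \<in> T})"

end

theory Submission
  imports Defs
begin

text \<open>Round the activity levels by \<open>g r = \<lceil>r + a\<rceil> - \<lceil>a\<rceil>\<close>. This map is monotone, fixes the
  integers and commutes with integer translations, hence also with the finite maxima defining the
  technology. So if the activity vector \<open>t\<close> produces \<open>(x - a, y + b)\<close> from integral data, where
  \<open>x, y\<close> are integral and \<open>a = 0\<close> or \<open>b = 0\<close>, then \<open>g \<circ> t\<close> produces \<open>(x - \<lceil>a\<rceil>, y + \<lceil>b\<rceil>)\<close>,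
  and \<open>max t = 0\<close> implies \<open>max (g \<circ> t) = 0\<close>. Taking \<open>(a, b) = (\<delta>, 0)\<close> resp. \<open>(0, \<delta>)\<close>, every
  feasible input or output shift \<open>\<delta>\<close> of an integral point can be rounded up to the feasible
  integral shift \<open>\<lceil>\<delta>\<rceil>\<close>, so the suprema over the real and the integral technology agree.\<close>

lemma finite_SUP_mono_commute:
  fixes g :: "'a::complete_linorder \<Rightarrow> 'b::complete_linorder"
  assumes "mono g" "g bot = bot" "finite A"
  shows "g (SUP x\<in>A. f x) = (SUP x\<in>A. g (f x))"
proof (cases "A = {}")
  case False
  with assms show ?thesis
    by (simp add: cSup_eq_Max mono_Max_commute image_image)
qed (simp add: assms(2))

fun shifted_ceiling :: "real \<Rightarrow> ereal \<Rightarrow> ereal" where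
  "shifted_ceiling a (ereal r) = ereal (of_int \<lceil>r + a\<rceil> - of_int \<lceil>a\<rceil>)"
| "shifted_ceiling a PInfty = \<infinity>"
| "shifted_ceiling a MInfty = -\<infinity>"

lemma shifted_ceiling_infinity [simp]:
  "shifted_ceiling a \<infinity> = \<infinity>" "shifted_ceiling a (-\<infinity>) = -\<infinity>"
  using shifted_ceiling.simps(2,3) by simp_all

lemma mono_shifted_ceiling: "mono (shifted_ceiling a)"
proof
  fix r s :: ereal
  assume "r \<le> s"
  then show "shifted_ceiling a r \<le> shifted_ceiling a s"
    by (cases r; cases s) (auto intro: ceiling_mono)
qed

lemma shifted_ceiling_bot: "shifted_ceiling a bot = bot"
  by (simp add: bot_ereal_def)

lemma shifted_ceiling_finite: "r \<noteq> \<infinity> \<Longrightarrow> shifted_ceiling a r \<noteq> \<infinity>"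
  by (cases r) auto

lemma shifted_ceiling_add_int:
  assumes "c \<in> \<int>"
  shows "shifted_ceiling a (r + ereal c) = shifted_ceiling a r + ereal c"
proof -
  obtain z where z: "c = of_int z" using assms by (auto elim: Ints_cases)
  have "\<lceil>s + c + a\<rceil> = \<lceil>s + a\<rceil> + z" for s
    using z by (metis add.commute add.left_commute ceiling_add_of_int)
  then show ?thesis using z by (cases r) simp_all
qed

lemma shifted_ceiling_int: "c \<in> \<int> \<Longrightarrow> shifted_ceiling a (ereal c) = ereal c"
  using shifted_ceiling_add_int[of c a 0] by (simp add: zero_ereal_def)

lemma shifted_ceiling_minus:
  "c \<in> \<int> \<Longrightarrow> shifted_ceiling a (ereal (c - a)) = ereal (c - of_int \<lceil>a\<rceil>)"
  by (auto elim: Ints_cases)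

lemma shifted_ceiling_plus:
  assumes "c \<in> \<int>" "a = 0 \<or> b = 0"
  shows "shifted_ceiling a (ereal (c + b)) = ereal (c + of_int \<lceil>b\<rceil>)"
  using assms shifted_ceiling_int[of c a] by (auto elim!: Ints_cases simp: add.commute)

definition admissible_activity ::
    "nat \<Rightarrow> (nat \<Rightarrow> real^'m) \<Rightarrow> (nat \<Rightarrow> real^'n) \<Rightarrow> (nat \<Rightarrow> ereal) \<Rightarrow> real^'m \<Rightarrow> real^'n \<Rightarrow> bool" where
  "admissible_activity l X Y t x y \<longleftrightarrow> (\<forall>k\<in>{1..l}. t k \<noteq> \<infinity>) \<and>
     (\<forall>i. (SUP k\<in>{1..l}. t k + ereal (X k $ i)) \<le> ereal (x $ i)) \<and>
     (\<forall>j. ereal (y $ j) \<le> (SUP k\<in>{1..l}. t k + ereal (Y k $ j)))"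

lemma maxplus_T_C_iff:
  "(x, y) \<in> maxplus_T_C l X Y \<longleftrightarrow>
     (\<forall>i. 0 \<le> x $ i) \<and> (\<forall>j. 0 \<le> y $ j) \<and> (\<exists>t. admissible_activity l X Y t x y)"
  by (simp add: maxplus_T_C_def admissible_activity_def)

lemma maxplus_T_V_iff:
  "(x, y) \<in> maxplus_T_V l X Y \<longleftrightarrow>
     (\<forall>i. 0 \<le> x $ i) \<and> (\<forall>j. 0 \<le> y $ j) \<and>
     (\<exists>t. admissible_activity l X Y t x y \<and> (SUP k\<in>{1..l}. t k) = 0)"
  by (auto simp add: maxplus_T_V_def admissible_activity_def)

lemma nat_vec_iff_Ints_nonneg: "nat_vec v \<longleftrightarrow> (\<forall>i. v $ i \<in> \<int> \<and> 0 \<le> v $ i)"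
  by (auto simp add: nat_vec_def Nats_altdef2)

lemma admissible_activity_shifted_ceiling:
  assumes data: "\<forall>k\<in>{1..l}. nat_vec (X k) \<and> nat_vec (Y k)"
    and x: "nat_vec x" and y: "nat_vec y" and ab: "a = 0 \<or> b = 0"
    and t: "admissible_activity l X Y t (x - (\<chi> i. a)) (y + (\<chi> j. b))"
  shows "admissible_activity l X Y (\<lambda>k. shifted_ceiling a (t k))
           (x - (\<chi> i. of_int \<lceil>a\<rceil>)) (y + (\<chi> j. of_int \<lceil>b\<rceil>))"
proof -
  let ?g = "shifted_ceiling a"
  have g_SUP: "?g (SUP k\<in>{1..l}. t k + ereal (c k)) = (SUP k\<in>{1..l}. ?g (t k) + ereal (c k))"
    if "\<forall>k\<in>{1..l}. c k \<in> \<int>" for c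
    using that by (simp add: finite_SUP_mono_commute mono_shifted_ceiling shifted_ceiling_bot
        shifted_ceiling_add_int)
  have "(SUP k\<in>{1..l}. ?g (t k) + ereal (X k $ i)) \<le> ereal (x $ i - of_int \<lceil>a\<rceil>)" for i
  proof -
    have "(SUP k\<in>{1..l}. t k + ereal (X k $ i)) \<le> ereal (x $ i - a)"
      using t by (simp add: admissible_activity_def)
    then have "?g (SUP k\<in>{1..l}. t k + ereal (X k $ i)) \<le> ?g (ereal (x $ i - a))"
      by (rule monoD[OF mono_shifted_ceiling])
    then show ?thesis
      using g_SUP data x shifted_ceiling_minus by (simp add: nat_vec_iff_Ints_nonneg)
  qed
  moreover have "ereal (y $ j + of_int \<lceil>b\<rceil>) \<le> (SUP k\<in>{1..l}. ?g (t k) + ereal (Y k $ j))" for j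
  proof -
    have "ereal (y $ j + b) \<le> (SUP k\<in>{1..l}. t k + ereal (Y k $ j))"
      using t by (simp add: admissible_activity_def)
    then have "?g (ereal (y $ j + b)) \<le> ?g (SUP k\<in>{1..l}. t k + ereal (Y k $ j))"
      by (rule monoD[OF mono_shifted_ceiling])
    then show ?thesis
      using g_SUP data y ab shifted_ceiling_plus by (simp add: nat_vec_iff_Ints_nonneg)
  qed
  ultimately show ?thesis
    using t by (simp add: admissible_activity_def shifted_ceiling_finite)
qed

lemma shifted_ceiling_SUP_eq_0:
  assumes "finite K" "(SUP k\<in>K. t k) = (0::ereal)"
  shows "(SUP k\<in>K. shifted_ceiling a (t k)) = 0"
proof -
  have "(SUP k\<in>K. shifted_ceiling a (t k)) = shifted_ceiling a (SUP k\<in>K. t k)"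
    by (rule finite_SUP_mono_commute[OF mono_shifted_ceiling shifted_ceiling_bot assms(1), symmetric])
  also have "\<dots> = 0"
    using assms(2) shifted_ceiling_int[of 0 a] by (simp add: zero_ereal_def)
  finally show ?thesis .
qed

lemma nat_vec_diff_ceiling:
  assumes "nat_vec x" "\<forall>i. 0 \<le> (x - (\<chi> i. a)) $ i"
  shows "nat_vec (x - (\<chi> i. of_int \<lceil>a\<rceil>))"
proof -
  have "of_int \<lceil>a\<rceil> \<le> x $ i" for i
  proof -
    obtain z where "x $ i = of_int z" using assms(1) Ints_cases nat_vec_iff_Ints_nonneg by metis
    moreover have "a \<le> x $ i" using assms(2) by simp
    ultimately show ?thesis by (simp add: ceiling_le_iff)
  qed
  then show ?thesis using assms(1) by (simp add: nat_vec_iff_Ints_nonneg)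
qed

lemma nat_vec_add_ceiling:
  assumes "nat_vec y" "\<forall>j. 0 \<le> (y + (\<chi> j. b)) $ j"
  shows "nat_vec (y + (\<chi> j. of_int \<lceil>b\<rceil>))"
proof -
  have "0 \<le> y $ j + of_int \<lceil>b\<rceil>" for j
  proof -
    have "0 \<le> y $ j + b" using assms(2) by simp
    with le_of_int_ceiling[of b] show ?thesis by linarith
  qed
  then show ?thesis using assms(1) by (simp add: nat_vec_iff_Ints_nonneg)
qed

lemma nat_points_ceiling_shift:
  assumes "nat_vec x" "nat_vec y" "(x - (\<chi> i. a), y + (\<chi> j. b)) \<in> maxplus_T_C l X Y"
  shows "(x - (\<chi> i. of_int \<lceil>a\<rceil>), y + (\<chi> j. of_int \<lceil>b\<rceil>)) \<in> nat_points"
  using assms by (simp add: maxplus_T_C_iff nat_points_def nat_vec_diff_ceiling nat_vec_add_ceiling)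

lemma maxplus_T_V_subset_T_C: "maxplus_T_V l X Y \<subseteq> maxplus_T_C l X Y"
  by (auto simp add: maxplus_T_V_iff maxplus_T_C_iff)

lemma maxplus_T_C_ceiling:
  assumes "\<forall>k\<in>{1..l}. nat_vec (X k) \<and> nat_vec (Y k)" "nat_vec x" "nat_vec y" "a = 0 \<or> b = 0"
    and xy: "(x - (\<chi> i. a), y + (\<chi> j. b)) \<in> maxplus_T_C l X Y"
  shows "(x - (\<chi> i. of_int \<lceil>a\<rceil>), y + (\<chi> j. of_int \<lceil>b\<rceil>)) \<in> maxplus_Z_C l X Y"
proof -
  obtain t where "admissible_activity l X Y t (x - (\<chi> i. a)) (y + (\<chi> j. b))"
    using xy unfolding maxplus_T_C_iff by blast
  then have "admissible_activity l X Y (\<lambda>k. shifted_ceiling a (t k))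
      (x - (\<chi> i. of_int \<lceil>a\<rceil>)) (y + (\<chi> j. of_int \<lceil>b\<rceil>))"
    by (rule admissible_activity_shifted_ceiling[OF assms(1-4)])
  moreover have "(x - (\<chi> i. of_int \<lceil>a\<rceil>), y + (\<chi> j. of_int \<lceil>b\<rceil>)) \<in> nat_points"
    using assms(2,3) xy by (rule nat_points_ceiling_shift)
  ultimately show ?thesis
    by (auto simp add: maxplus_Z_C_def maxplus_T_C_iff nat_points_def nat_vec_iff_Ints_nonneg)
qed

lemma maxplus_T_V_ceiling:
  assumes "\<forall>k\<in>{1..l}. nat_vec (X k) \<and> nat_vec (Y k)" "nat_vec x" "nat_vec y" "a = 0 \<or> b = 0"
    and xy: "(x - (\<chi> i. a), y + (\<chi> j. b)) \<in> maxplus_T_V l X Y"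
  shows "(x - (\<chi> i. of_int \<lceil>a\<rceil>), y + (\<chi> j. of_int \<lceil>b\<rceil>)) \<in> maxplus_Z_V l X Y"
proof -
  obtain t where t: "admissible_activity l X Y t (x - (\<chi> i. a)) (y + (\<chi> j. b))"
    and t0: "(SUP k\<in>{1..l}. t k) = 0"
    using xy unfolding maxplus_T_V_iff by blast
  have "admissible_activity l X Y (\<lambda>k. shifted_ceiling a (t k))
      (x - (\<chi> i. of_int \<lceil>a\<rceil>)) (y + (\<chi> j. of_int \<lceil>b\<rceil>))"
    using t by (rule admissible_activity_shifted_ceiling[OF assms(1-4)])
  moreover have "(SUP k\<in>{1..l}. shifted_ceiling a (t k)) = 0"
    using finite_atLeastAtMost t0 by (rule shifted_ceiling_SUP_eq_0)
  moreover have "(x - (\<chi> i. of_int \<lceil>a\<rceil>), y + (\<chi> j. of_int \<lceil>b\<rceil>)) \<in> nat_points"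
    using assms(2,3) xy maxplus_T_V_subset_T_C by (blast intro: nat_points_ceiling_shift)
  ultimately show ?thesis
    by (auto simp add: maxplus_Z_V_def maxplus_T_V_iff nat_points_def nat_vec_iff_Ints_nonneg)
qed

lemma D_in_nat_points_eq:
  assumes "\<And>\<delta>. (x - (\<chi> i. \<delta>), y) \<in> T \<Longrightarrow> (x - (\<chi> i. of_int \<lceil>\<delta>\<rceil>), y) \<in> T \<inter> nat_points"
  shows "D_in x y (T \<inter> nat_points) = D_in x y T"
  unfolding D_in_def
proof (rule SUP_eq)
  fix \<delta> assume "\<delta> \<in> {\<delta>. (x - (\<chi> i. \<delta>), y) \<in> T}"
  then show "\<exists>\<delta>'\<in>{\<delta>. (x - (\<chi> i. \<delta>), y) \<in> T \<inter> nat_points}. ereal \<delta> \<le> ereal \<delta>'"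
    using assms by (intro bexI[of _ "of_int \<lceil>\<delta>\<rceil>"]) auto
qed auto

lemma D_out_nat_points_eq:
  assumes "\<And>\<delta>. (x, y + (\<chi> j. \<delta>)) \<in> T \<Longrightarrow> (x, y + (\<chi> j. of_int \<lceil>\<delta>\<rceil>)) \<in> T \<inter> nat_points"
  shows "D_out x y (T \<inter> nat_points) = D_out x y T"
  unfolding D_out_def
proof (rule SUP_eq)
  fix \<delta> assume "\<delta> \<in> {\<delta>. (x, y + (\<chi> j. \<delta>)) \<in> T}"
  then show "\<exists>\<delta>'\<in>{\<delta>. (x, y + (\<chi> j. \<delta>)) \<in> T \<inter> nat_points}. ereal \<delta> \<le> ereal \<delta>'"
    using assms by (intro bexI[of _ "of_int \<lceil>\<delta>\<rceil>"]) auto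
qed auto

theorem mainTheorem7:
  fixes l :: nat and X :: "nat \<Rightarrow> real^'m" and Y :: "nat \<Rightarrow> real^'n" and kb :: nat
  assumes "\<forall>k\<in>{1..l}. nat_vec (X k) \<and> nat_vec (Y k)"
    and "kb \<in> {1..l}"
  shows "D_in (X kb) (Y kb) (maxplus_T_V l X Y) = D_in (X kb) (Y kb) (maxplus_Z_V l X Y)
       \<and> D_in (X kb) (Y kb) (maxplus_T_C l X Y) = D_in (X kb) (Y kb) (maxplus_Z_C l X Y)
       \<and> D_out (X kb) (Y kb) (maxplus_T_V l X Y) = D_out (X kb) (Y kb) (maxplus_Z_V l X Y)
       \<and> D_out (X kb) (Y kb) (maxplus_T_C l X Y) = D_out (X kb) (Y kb) (maxplus_Z_C l X Y)"
proof -
  have x: "nat_vec (X kb)" and y: "nat_vec (Y kb)" using assms by auto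
  note V = maxplus_T_V_ceiling[OF assms(1) x y] and C = maxplus_T_C_ceiling[OF assms(1) x y]
  show ?thesis
    using V[of _ 0] C[of _ 0] V[of 0] C[of 0]
    unfolding maxplus_Z_V_def maxplus_Z_C_def
    by (simp add: D_in_nat_points_eq D_out_nat_points_eq zero_vec_def[symmetric])
qed

end
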